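(* For each $i\in\{1,2,3,4\}$ and any right-hand side, GMRES applied (in exact arithmetic) to the preconditioned system $\mathcal{M}_i^{-1}\mathcal{A}\mathbf{x}=\mathcal{M}_i^{-1}\tilde b$ terminates with the exact solution in at most $n+q+1$ iterations.
   Context: Let $A_1\in\mathbb{R}^{p\times n}$ have full column rank and $A_2\in\mathbb{R}^{q\times n}$; let $b_1\in\mathbb{R}^p$, $b_2\in\mathbb{R}^q$. Set $P=A_1^TA_1$, assume $P-A_2^TA_2$ is symmetric positive definite (so $\mathcal{A}$ below is nonsingular), and let $\hat P\in\mathbb{R}^{n\times n}$ be symmetric positive definite. Define $\mathcal{A}=\begin{pmatrix}I_p&A_1&0\\0&P&A_2^T\\0&A_2&I_q\end{pmatrix}$, $\tilde b=(b_1;A_1^Tb_1;b_2)$, $\mathcal{M}_1=\begin{pmatrix}I_p&0&0\\0&\hat P&0\\0&0&I_q\end{pmatrix}$, $\mathcal{M}_2=\begin{pmatrix}I_p&0&0\\0&\hat P&A_2^T\\0&0&I_q\end{pmatrix}$, $\mathcal{M}_3=\begin{pmatrix}I_p&A_1&0\\0&\hat P&0\\0&0&I_q\end{pmatrix}$, $\mathcal{M}_4=\begin{pmatrix}I_p&A_1&0\\0&\hat P&A_2^T\\0&0&I_q\end{pmatrix}$. *)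

theory Defs
  imports "HOL-Analysis.Analysis"
begin

definition spd :: "real^'n^'n \<Rightarrow> bool" where
  "spd M \<longleftrightarrow> transpose M = M \<and> (\<forall>x. x \<noteq> 0 \<longrightarrow> x \<bullet> (M *v x) > 0)"

definition block3 ::
  "real^'p^'p \<Rightarrow> real^'n^'p \<Rightarrow> real^'q^'p \<Rightarrow>
   real^'p^'n \<Rightarrow> real^'n^'n \<Rightarrow> real^'q^'n \<Rightarrow>
   real^'p^'q \<Rightarrow> real^'n^'q \<Rightarrow> real^'q^'q \<Rightarrow> real^('p + ('n + 'q))^('p + ('n + 'q))" where
  "block3 B11 B12 B13 B21 B22 B23 B31 B32 B33 =
    (\<chi> i j. case i of
       Inl a \<Rightarrow> (case j of Inl b \<Rightarrow> B11$a$b | Inr (Inl b) \<Rightarrow> B12$a$b | Inr (Inr b) \<Rightarrow> B13$a$b)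
     | Inr (Inl a) \<Rightarrow> (case j of Inl b \<Rightarrow> B21$a$b | Inr (Inl b) \<Rightarrow> B22$a$b | Inr (Inr b) \<Rightarrow> B23$a$b)
     | Inr (Inr a) \<Rightarrow> (case j of Inl b \<Rightarrow> B31$a$b | Inr (Inl b) \<Rightarrow> B32$a$b | Inr (Inr b) \<Rightarrow> B33$a$b))"

definition bvec3 :: "real^'p \<Rightarrow> real^'n \<Rightarrow> real^'q \<Rightarrow> real^('p + ('n + 'q))" where
  "bvec3 u v w = (\<chi> i. case i of Inl a \<Rightarrow> u$a | Inr (Inl a) \<Rightarrow> v$a | Inr (Inr a) \<Rightarrow> w$a)"

text \<open>The matrices of the paper (P = A1^T A1).\<close>
definition calA :: "real^'n^'p \<Rightarrow> real^'n^'q \<Rightarrow> real^('p + ('n + 'q))^('p + ('n + 'q))" where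
  "calA A1 A2 = block3 (mat 1) A1 0  0 (transpose A1 ** A1) (transpose A2)  0 A2 (mat 1)"

definition btilde :: "real^'n^'p \<Rightarrow> real^'p \<Rightarrow> real^'q \<Rightarrow> real^('p + ('n + 'q))" where
  "btilde A1 b1 b2 = bvec3 b1 (transpose A1 *v b1) b2"

definition calM1 :: "real^'n^'n \<Rightarrow> real^('p::finite + ('n + 'q::finite))^('p + ('n + 'q))" where
  "calM1 Ph = block3 (mat 1) 0 0  0 Ph 0  0 0 (mat 1)"

definition calM2 :: "real^'n^'q \<Rightarrow> real^'n^'n \<Rightarrow> real^('p::finite + ('n + 'q))^('p + ('n + 'q))" where
  "calM2 A2 Ph = block3 (mat 1) 0 0  0 Ph (transpose A2)  0 0 (mat 1)"

definition calM3 :: "real^'n^'p \<Rightarrow> real^'n^'n \<Rightarrow> real^('p + ('n + 'q::finite))^('p + ('n + 'q))" where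
  "calM3 A1 Ph = block3 (mat 1) A1 0  0 Ph 0  0 0 (mat 1)"

definition calM4 :: "real^'n^'p \<Rightarrow> real^'n^'q \<Rightarrow> real^'n^'n \<Rightarrow> real^('p + ('n + 'q))^('p + ('n + 'q))" where
  "calM4 A1 A2 Ph = block3 (mat 1) A1 0  0 Ph (transpose A2)  0 0 (mat 1)"

definition krylov :: "real^'m^'m \<Rightarrow> real^'m \<Rightarrow> nat \<Rightarrow> (real^'m) set" where
  "krylov B r k = span {((\<lambda>v. B *v v) ^^ j) r | j. j < k}"

definition gmres_iterate :: "real^'m^'m \<Rightarrow> real^'m \<Rightarrow> real^'m \<Rightarrow> nat \<Rightarrow> real^'m" where
  "gmres_iterate B c x0 k =
    (SOME x. x \<in> (\<lambda>v. x0 + v) ` krylov B (c - B *v x0) k \<and>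
       (\<forall>y \<in> (\<lambda>v. x0 + v) ` krylov B (c - B *v x0) k. norm (c - B *v x) \<le> norm (c - B *v y)))"

definition gmres_exact_within :: "real^'m^'m \<Rightarrow> real^'m \<Rightarrow> real^'m \<Rightarrow> nat \<Rightarrow> bool" where
  "gmres_exact_within B c x0 N \<longleftrightarrow> (\<exists>k \<le> N. B *v gmres_iterate B c x0 k = c)"

end

(* Every M_i agrees with the saddle point matrix A on its first block column, so
   B = M_i^-1 A fixes the first p unit vectors and B - I has rank at most n + q.
   For an invertible B with rank (B - I) <= r, the Krylov vectors B^j r0 of any initial
   residual r0 all lie in span {r0} + range (B - I), a space of dimension at most r + 1.
   Hence some Krylov space K_m with m <= r + 1 is B-invariant; B is injective and thus
   bijective on it, so B^-1 r0 lies in K_m and x0 + B^-1 r0, the exact solution, is a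
   competitor of the m-th GMRES minimisation. *)

theory Submission
  imports Defs
begin

lemma ex_term_in_span_of_prefix:
  fixes x :: "nat \<Rightarrow> 'a::euclidean_space"
  assumes "\<And>j. x j \<in> V"
  shows "\<exists>m \<le> dim V. x m \<in> span (x ` {..<m})"
proof (rule ccontr)
  assume "\<not> ?thesis"
  then have new: "x m \<notin> span (x ` {..<m})" if "m \<le> dim V" for m
    using that by blast
  have "dim (x ` {..<m}) = m" if "m \<le> Suc (dim V)" for m
    using that
  proof (induction m)
    case (Suc m)
    then show ?case
      using new[of m] by (simp add: lessThan_Suc dim_insert)
  qed simp
  moreover have "dim (x ` {..<Suc (dim V)}) \<le> dim V"
    using assms by (intro dim_subset) auto
  ultimately show False
    by simp
qed

lemma span_orbit_invariant:
  assumes "linear f" and "(f ^^ m) v \<in> span ((\<lambda>j. (f ^^ j) v) ` {..<m})"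
  shows "f ` span ((\<lambda>j. (f ^^ j) v) ` {..<m}) \<subseteq> span ((\<lambda>j. (f ^^ j) v) ` {..<m})"
proof -
  let ?S = "(\<lambda>j. (f ^^ j) v) ` {..<m}"
  have "f ` ?S \<subseteq> span ?S"
  proof
    fix y
    assume "y \<in> f ` ?S"
    then obtain j where "j < m" and "y = (f ^^ Suc j) v"
      by auto
    then show "y \<in> span ?S"
      using assms(2) by (cases "Suc j = m") (auto intro!: span_base rev_image_eqI[of "Suc j"])
  qed
  then show ?thesis
    by (simp add: span_linear_image[OF assms(1), symmetric] span_minimal)
qed

lemma linear_inj_image_invariant_subspace:
  fixes f :: "'a::euclidean_space \<Rightarrow> 'a"
  assumes "linear f" and "inj f" and "subspace S" and "f ` S \<subseteq> S"
  shows "f ` S = S"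
proof (rule subspace_dim_equal)
  show "dim S \<le> dim (f ` S)"
    using assms(1,2) by (simp add: dim_image_eq inj_on_subset)
qed (use assms in \<open>auto intro: linear_subspace_image\<close>)

lemma krylov_eq_span_image: "krylov B r k = span ((\<lambda>j. ((\<lambda>v. B *v v) ^^ j) r) ` {..<k})"
  unfolding krylov_def by (simp add: lessThan_def image_Collect)

lemma gmres_iterate_solves:
  assumes "x \<in> (\<lambda>v. x0 + v) ` krylov B (c - B *v x0) k" and "B *v x = c"
  shows "B *v gmres_iterate B c x0 k = c"
proof -
  have "norm (c - B *v gmres_iterate B c x0 k) \<le> norm (c - B *v x)"
    unfolding gmres_iterate_def by (rule someI2[of _ x]) (use assms in auto)
  then show ?thesis
    using assms(2) by simp
qed

theorem gmres_exact_within_identity_plus_low_rank: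
  fixes B :: "real^'m^'m"
  assumes "invertible B" and "rank (B - mat 1) \<le> r"
  shows "gmres_exact_within B c x0 (Suc r)"
proof -
  define f where "f = (\<lambda>v. B *v v)"
  define r0 where "r0 = c - B *v x0"
  define V where "V = span (insert r0 (range (\<lambda>x. (B - mat 1) *v x)))"
  have orbit_in_V: "(f ^^ j) r0 \<in> V" for j
  proof (induction j)
    case (Suc j)
    have "(f ^^ Suc j) r0 = (f ^^ j) r0 + (B - mat 1) *v (f ^^ j) r0"
      by (simp add: f_def matrix_vector_mult_diff_rdistrib)
    moreover have "(B - mat 1) *v (f ^^ j) r0 \<in> V"
      unfolding V_def by (rule span_base) blast
    ultimately show ?case
      using Suc unfolding V_def by (simp add: span_add)
  qed (simp add: V_def span_base)
  have "dim V \<le> Suc r"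
    using assms(2) by (simp add: V_def dim_insert rank_dim_range)
  moreover obtain m where "m \<le> dim V"
    and m: "(f ^^ m) r0 \<in> span ((\<lambda>j. (f ^^ j) r0) ` {..<m})"
    using ex_term_in_span_of_prefix[of "\<lambda>j. (f ^^ j) r0", OF orbit_in_V] by blast
  ultimately have "m \<le> Suc r"
    by linarith
  define K where "K = krylov B r0 m"
  have K: "K = span ((\<lambda>j. (f ^^ j) r0) ` {..<m})"
    unfolding K_def krylov_eq_span_image f_def ..
  have "f ` K = K"
    unfolding K
  proof (rule linear_inj_image_invariant_subspace)
    show lin: "linear f" and "inj f"
      unfolding f_def using assms(1) by (simp_all add: inj_matrix_vector_mult)
    from lin m show "f ` span ((\<lambda>j. (f ^^ j) r0) ` {..<m}) \<subseteq> span ((\<lambda>j. (f ^^ j) r0) ` {..<m})"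
      by (rule span_orbit_invariant)
  qed simp
  moreover have "r0 \<in> K"
    using m by (cases m) (auto simp: K intro!: span_base rev_image_eqI[of 0])
  ultimately obtain u where "u \<in> K" and "B *v u = r0"
    by (metis f_def imageE)
  then have "x0 + u \<in> (\<lambda>v. x0 + v) ` krylov B (c - B *v x0) m" and "B *v (x0 + u) = c"
    by (auto simp: K_def r0_def matrix_vector_right_distrib)
  then show ?thesis
    unfolding gmres_exact_within_def using \<open>m \<le> Suc r\<close> gmres_iterate_solves by blast
qed

lemma matrix_inv_left: "invertible M \<Longrightarrow> matrix_inv M ** M = mat 1"
  unfolding invertible_def matrix_inv_def by (rule someI2_ex) auto

lemma invertible_matrix_inv: "invertible M \<Longrightarrow> invertible (matrix_inv M)"
  unfolding invertible_def matrix_inv_def by (rule someI2_ex) auto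

lemma matrix_inv_mult_fixes:
  fixes M A :: "real^'m^'m"
  assumes "invertible M" and "A *v v = M *v v"
  shows "(matrix_inv M ** A) *v v = v"
proof -
  have "(matrix_inv M ** A) *v v = (matrix_inv M ** M) *v v"
    using assms(2) by (simp add: matrix_vector_mul_assoc[symmetric])
  also have "\<dots> = v"
    using assms(1) by (simp add: matrix_inv_left)
  finally show ?thesis .
qed

lemma rank_le_CARD_if_Inl_columns_zero:
  fixes C :: "real^('p::finite + 'm::finite)^'k"
  assumes "\<And>a. C *v axis (Inl a) 1 = 0"
  shows "rank C \<le> CARD('m)"
proof -
  let ?R = "(\<lambda>b. C *v axis (Inr b) 1) ` UNIV"
  have "columns C \<subseteq> insert 0 ?R"
  proof
    fix y
    assume "y \<in> columns C"
    then obtain i where "y = C *v axis i 1"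
      by (auto simp: columns_def matrix_vector_mult_basis)
    then show "y \<in> insert 0 ?R"
      using assms by (cases i) auto
  qed
  then have "rank C \<le> dim (insert 0 ?R)"
    by (simp add: column_rank_def dim_subset)
  also have "\<dots> = dim ?R"
    by (simp add: dim_insert span_zero)
  also have "\<dots> \<le> card ?R"
    by (rule dim_le_card') simp
  also have "\<dots> \<le> CARD('m)"
    by (rule card_image_le) simp
  finally show ?thesis .
qed

lemma spd_mult_eq_0_iff: "spd M \<Longrightarrow> M *v x = 0 \<longleftrightarrow> x = 0"
  unfolding spd_def by (metis inner_zero_right less_irrefl matrix_vector_mult_0_right)

lemma sum_UNIV_Plus:
  "sum f (UNIV :: ('a::finite + 'b::finite) set) = (\<Sum>a\<in>UNIV. f (Inl a)) + (\<Sum>b\<in>UNIV. f (Inr b))"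
  using sum.Plus[of "UNIV :: 'a set" "UNIV :: 'b set" f] by (simp add: o_def)

lemma block3_mult_bvec3:
  "block3 B11 B12 B13 B21 B22 B23 B31 B32 B33 *v bvec3 u v w =
   bvec3 (B11 *v u + B12 *v v + B13 *v w) (B21 *v u + B22 *v v + B23 *v w)
     (B31 *v u + B32 *v v + B33 *v w)"
  unfolding vec_eq_iff matrix_vector_mult_def block3_def bvec3_def
  by (simp add: sum_UNIV_Plus split: sum.split)

lemma bvec3_eq_0_iff [simp]: "bvec3 u v w = 0 \<longleftrightarrow> u = 0 \<and> v = 0 \<and> w = 0"
  unfolding bvec3_def vec_eq_iff by (auto split: sum.split)

lemma bvec3_cases:
  obtains u v w where "x = bvec3 u v w"
proof
  show "x = bvec3 (\<chi> a. x $ Inl a) (\<chi> a. x $ Inr (Inl a)) (\<chi> a. x $ Inr (Inr a))"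
    unfolding bvec3_def vec_eq_iff by (auto split: sum.split)
qed

lemma axis_Inl_eq_bvec3: "axis (Inl a) 1 = bvec3 (axis a 1) 0 0"
  unfolding bvec3_def vec_eq_iff by (auto simp: axis_def split: sum.split)

lemma block3_unit_first_column:
  "block3 (mat 1) X Y 0 Z V 0 T S *v axis (Inl a) 1 = axis (Inl a) 1"
  by (simp add: axis_Inl_eq_bvec3 block3_mult_bvec3)

lemma invertible_block3_unit_upper:
  assumes "spd Ph"
  shows "invertible (block3 (mat 1) X 0 0 Ph Z 0 0 (mat 1))"
  unfolding invertible_left_inverse matrix_left_invertible_ker
proof (intro allI impI)
  fix x
  assume x: "block3 (mat 1) X 0 0 Ph Z 0 0 (mat 1) *v x = 0"
  obtain u v w where uvw: "x = bvec3 u v w"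
    by (rule bvec3_cases)
  with x have u: "u + X *v v = 0" and v: "Ph *v v + Z *v w = 0" and w: "w = 0"
    by (auto simp: block3_mult_bvec3)
  from v w assms have "v = 0"
    by (simp add: spd_mult_eq_0_iff)
  with u w show "x = 0"
    by (simp add: uvw)
qed

lemma invertible_calA:
  assumes "spd (transpose A1 ** A1 - transpose A2 ** A2)"
  shows "invertible (calA A1 A2)"
  unfolding invertible_left_inverse matrix_left_invertible_ker
proof (intro allI impI)
  fix x
  assume x: "calA A1 A2 *v x = 0"
  obtain u v w where uvw: "x = bvec3 u v w"
    by (rule bvec3_cases)
  with x have u: "u + A1 *v v = 0" and v: "(transpose A1 ** A1) *v v + transpose A2 *v w = 0"
    and w: "A2 *v v + w = 0"
    by (simp_all add: calA_def block3_mult_bvec3)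
  from w have "w = - (A2 *v v)"
    by (simp add: eq_neg_iff_add_eq_0 add.commute)
  with v have "(transpose A1 ** A1 - transpose A2 ** A2) *v v = 0"
    by (simp add: matrix_vector_mult_diff_rdistrib matrix_vector_mul_assoc[symmetric] vec.neg)
  with assms have "v = 0"
    by (simp add: spd_mult_eq_0_iff)
  with u w show "x = 0"
    by (simp add: uvw)
qed

theorem corollary2:
  fixes A1 :: "real^'n^'p" and A2 :: "real^'n^'q" and Ph :: "real^'n^'n"
    and b1 :: "real^'p" and b2 :: "real^'q"
  assumes "rank A1 = CARD('n)"
    and "spd (transpose A1 ** A1 - transpose A2 ** A2)"
    and "spd Ph"
  shows "\<forall>M \<in> {calM1 Ph :: real^('p + ('n + 'q))^('p + ('n + 'q)), calM2 A2 Ph, calM3 A1 Ph, calM4 A1 A2 Ph}.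
           \<forall>x0. gmres_exact_within (matrix_inv M ** calA A1 A2) (matrix_inv M *v btilde A1 b1 b2) x0
                  (CARD('n) + CARD('q) + 1)"
proof (intro ballI allI)
  fix M :: "real^('p + ('n + 'q))^('p + ('n + 'q))" and x0
  assume "M \<in> {calM1 Ph, calM2 A2 Ph, calM3 A1 Ph, calM4 A1 A2 Ph}"
  then obtain X :: "real^'n^'p" and Z :: "real^'q^'n"
    where M: "M = block3 (mat 1) X 0 0 Ph Z 0 0 (mat 1)"
    unfolding calM1_def calM2_def calM3_def calM4_def by blast
  have "invertible M"
    unfolding M using assms(3) by (rule invertible_block3_unit_upper)
  define B where "B = matrix_inv M ** calA A1 A2"
  have "invertible B"
    unfolding B_def using \<open>invertible M\<close> invertible_calA[OF assms(2)]
    by (simp add: invertible_mult invertible_matrix_inv)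
  have "B *v axis (Inl a) 1 = axis (Inl a) 1" for a
    unfolding B_def using \<open>invertible M\<close>
    by (rule matrix_inv_mult_fixes) (simp add: M calA_def block3_unit_first_column)
  then have "rank (B - mat 1) \<le> CARD('n + 'q)"
    by (intro rank_le_CARD_if_Inl_columns_zero) (simp add: matrix_vector_mult_diff_rdistrib)
  with \<open>invertible B\<close> show "gmres_exact_within B (matrix_inv M *v btilde A1 b1 b2) x0
      (CARD('n) + CARD('q) + 1)"
    by (simp add: gmres_exact_within_identity_plus_low_rank card_sum)
qed

end
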